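(* Fix constants $0\le\gamma\le\delta\le1$. Let $p_e(n;\gamma,\delta)$ be the probability that $1$ is contained in a cycle of length between $\gamma n$ and $\delta n$ of a permutation chosen uniformly at random from all permutations of $[n]$ with all cycle lengths even. Then $\lim_{n\to\infty}p_e(n;\gamma,\delta)=\sqrt{1-\gamma}-\sqrt{1-\delta}$, where the limit is taken through even $n$. *)

theory Defs
  imports "HOL-Analysis.Analysis" "HOL-Combinatorics.Permutations" "HOL-Combinatorics.Orbits"
begin

definition cycle_len :: "(nat \<Rightarrow> nat) \<Rightarrow> nat \<Rightarrow> nat" where
  "cycle_len \<sigma> x = card (orbit \<sigma> x)"

definition even_cycle_perms :: "nat \<Rightarrow> (nat \<Rightarrow> nat) set" where
  "even_cycle_perms n = {\<sigma>. \<sigma> permutes {1..n} \<and> (\<forall>x\<in>{1..n}. even (cycle_len \<sigma> x))}"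

definition p_e :: "nat \<Rightarrow> real \<Rightarrow> real \<Rightarrow> real" where
  "p_e n \<gamma> \<delta> =
     real (card {\<sigma> \<in> even_cycle_perms n.
                  \<gamma> * real n \<le> real (cycle_len \<sigma> 1) \<and> real (cycle_len \<sigma> 1) \<le> \<delta> * real n})
     / real (card (even_cycle_perms n))"

end

theory Submission
  imports Defs
begin

text \<open>
  Let \<open>u\<^sub>j = binom(2j, j) / 4\<^sup>j\<close>. Removing the successor of \<open>a\<close> from its cycle shows that
  among the \<open>(2m)! u\<^sub>m\<close> even-cycle permutations of a \<open>2m\<close>-set, exactly \<open>(2m-1)! u\<^sub>m\<^sub>-\<^sub>k\<close>
  put \<open>a\<close> on a cycle of length \<open>2k\<close>. Hence \<open>p\<^sub>e(2m)\<close> is a window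
  \<open>\<Sum>\<^sub>j u\<^sub>j\<close> over \<open>(1-\<delta>)m \<le> j \<le> (1-\<gamma>)m\<close>, divided by \<open>2m u\<^sub>m = \<Sum>\<^sub>j\<^sub><\<^sub>m u\<^sub>j\<close>.
  Since \<open>j u\<^sub>j\<^sup>2\<close> increases to a positive limit (Wallis), \<open>\<Sum>\<^sub>j\<^sub><\<^sub>n u\<^sub>j\<close> grows like \<open>\<surd>n\<close>,
  and the window ratio tends to \<open>\<surd>(1-\<gamma>) - \<surd>(1-\<delta>)\<close>.
\<close>

primrec binom_ratio :: "nat \<Rightarrow> real" where
  "binom_ratio 0 = 1"
| "binom_ratio (Suc j) =
     binom_ratio j * (2 * real j + 1) / (2 * real j + 2)"

definition binom_ratio_sum :: "nat \<Rightarrow> real" where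
  "binom_ratio_sum n = (\<Sum>j<n. binom_ratio j)"

definition wallis_seq :: "nat \<Rightarrow> real" where
  "wallis_seq j = real j * (binom_ratio j)\<^sup>2"

lemma binom_ratio_pos: "binom_ratio j > 0"
  by (induction j) auto

lemma binom_ratio_sum_eq: "binom_ratio_sum n = 2 * real n * binom_ratio n"
  unfolding binom_ratio_sum_def by (induction n) (simp_all add: field_simps)

lemma binom_ratio_sum_eq_sqrt: "binom_ratio_sum n = 2 * sqrt (real n * wallis_seq n)"
proof -
  have "real n * wallis_seq n = (real n * binom_ratio n)\<^sup>2"
    by (simp add: wallis_seq_def power2_eq_square)
  then show ?thesis
    using binom_ratio_pos[of n] by (simp add: binom_ratio_sum_eq)
qed

lemma binom_ratio_squared_le: "(binom_ratio j)\<^sup>2 \<le> 1 / (2 * real j + 1)"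
proof (induction j)
  case (Suc j)
  have "(binom_ratio (Suc j))\<^sup>2 = (binom_ratio j)\<^sup>2 * ((2 * real j + 1) / (2 * real j + 2))\<^sup>2"
    by (simp add: power_mult_distrib power_divide)
  also have "\<dots> \<le> 1 / (2 * real j + 1) * ((2 * real j + 1) / (2 * real j + 2))\<^sup>2"
    by (rule mult_right_mono[OF Suc]) simp
  also have "\<dots> = (2 * real j + 1) / (2 * real j + 2)\<^sup>2"
    by (simp add: power2_eq_square)
  also have "\<dots> \<le> 1 / (2 * real (Suc j) + 1)"
  proof -
    have "(2 * real j + 1) * (2 * real (Suc j) + 1) \<le> (2 * real j + 2)\<^sup>2"
      by (simp add: power2_eq_square algebra_simps)
    then show ?thesis by (simp add: divide_simps)
  qed
  finally show ?case .
qed simp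

lemma wallis_seq_mono: "incseq wallis_seq"
proof (rule incseq_SucI)
  fix j
  have "real j * (2 * real j + 2)\<^sup>2 \<le> (1 + real j) * (2 * real j + 1)\<^sup>2"
    by (simp add: power2_eq_square algebra_simps)
  then have "real j \<le> (1 + real j) * (2 * real j + 1)\<^sup>2 / (2 * real j + 2)\<^sup>2"
    by (simp add: pos_le_divide_eq)
  then have "real j * (binom_ratio j)\<^sup>2 \<le>
      (binom_ratio j)\<^sup>2 * ((1 + real j) * (2 * real j + 1)\<^sup>2 / (2 * real j + 2)\<^sup>2)"
    by (metis mult.commute mult_left_mono zero_le_power2)
  then show "wallis_seq j \<le> wallis_seq (Suc j)"
    by (simp add: wallis_seq_def power_mult_distrib power_divide mult_ac)
qed

lemma wallis_seq_le: "wallis_seq j \<le> 1/2"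
proof -
  have "wallis_seq j \<le> real j * (1 / (2 * real j + 1))"
    unfolding wallis_seq_def by (rule mult_left_mono[OF binom_ratio_squared_le]) simp
  also have "\<dots> \<le> 1/2" by (simp add: field_simps)
  finally show ?thesis .
qed

lemma wallis_seq_ge: "j \<ge> 1 \<Longrightarrow> wallis_seq j \<ge> 1/4"
  using wallis_seq_mono[unfolded incseq_def, rule_format, of 1 j]
  by (simp add: wallis_seq_def power2_eq_square)

lemma wallis_seq_converges: "\<exists>W. wallis_seq \<longlonglongrightarrow> W \<and> W \<ge> 1/4"
proof -
  have "Bseq wallis_seq"
    using wallis_seq_le by (intro BseqI'[where K="1/2"]) (simp add: wallis_seq_def)
  then obtain W where W: "wallis_seq \<longlonglongrightarrow> W"
    using wallis_seq_mono Bseq_mono_convergent convergent_def by (metis incseq_def)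
  moreover have "W \<ge> 1/4"
    using W wallis_seq_ge by (intro LIMSEQ_le_const) auto
  ultimately show ?thesis by blast
qed

lemma filterlim_at_top_if_ratio_tendsto_pos:
  assumes "(\<lambda>m. real (N m) / real m) \<longlonglongrightarrow> t" "t > 0"
  shows "filterlim N at_top sequentially"
proof -
  have lim: "filterlim (\<lambda>m. real (N m) / real m * real m) at_top sequentially"
    using filterlim_tendsto_pos_mult_at_top[OF assms filterlim_real_sequentially] .
  have ev: "\<forall>\<^sub>F m in sequentially. real (N m) / real m * real m = real (N m)"
    using eventually_ge_at_top[of "1::nat"] by eventually_elim auto
  show ?thesis
    using filterlim_cong[OF refl refl ev] lim
    by (simp add: filterlim_sequentially_iff_filterlim_real)
qed

lemma wallis_seq_ratio_tendsto:
  assumes lim: "(\<lambda>m. real (N m) / real m) \<longlonglongrightarrow> t" and "t \<ge> 0"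
  shows "(\<lambda>m. real (N m) / real m * (wallis_seq (N m) / wallis_seq m)) \<longlonglongrightarrow> t"
proof (cases "t = 0")
  case True
  have upper: "\<forall>\<^sub>F m in sequentially.
      real (N m) / real m * (wallis_seq (N m) / wallis_seq m) \<le> 2 * (real (N m) / real m)"
    using eventually_ge_at_top[of "1::nat"]
  proof eventually_elim
    case (elim m)
    have "wallis_seq (N m) / wallis_seq m \<le> (1/2) / (1/4)"
      using wallis_seq_ge[OF elim] wallis_seq_le[of "N m"]
      by (intro frac_le) (auto simp: wallis_seq_def)
    then have "real (N m) / real m * (wallis_seq (N m) / wallis_seq m) \<le> real (N m) / real m * 2"
      by (intro mult_left_mono) auto
    then show ?case by (metis mult.commute)
  qed
  have lower: "\<forall>\<^sub>F m in sequentially. 0 \<le> real (N m) / real m * (wallis_seq (N m) / wallis_seq m)"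
    by (simp add: wallis_seq_def)
  have "(\<lambda>m. 2 * (real (N m) / real m)) \<longlonglongrightarrow> 0"
    using lim True tendsto_mult_right_zero by blast
  then show ?thesis
    using True by (intro tendsto_sandwich[OF lower upper]) auto
next
  case False
  then have "t > 0" using assms(2) by simp
  obtain W where W: "wallis_seq \<longlonglongrightarrow> W" "W \<ge> 1/4"
    using wallis_seq_converges by blast
  have "(\<lambda>m. wallis_seq (N m)) \<longlonglongrightarrow> W"
    using filterlim_compose[OF W(1) filterlim_at_top_if_ratio_tendsto_pos[OF lim \<open>t > 0\<close>]] .
  then have "(\<lambda>m. real (N m) / real m * (wallis_seq (N m) / wallis_seq m)) \<longlonglongrightarrow> t * (W / W)"
    using W lim by (intro tendsto_intros) auto
  then show ?thesis using W by simp
qed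

lemma binom_ratio_sum_ratio_tendsto:
  assumes "(\<lambda>m. real (N m) / real m) \<longlonglongrightarrow> t" "t \<ge> 0"
  shows "(\<lambda>m. binom_ratio_sum (N m) / binom_ratio_sum m) \<longlonglongrightarrow> sqrt t"
proof -
  have "binom_ratio_sum (N m) / binom_ratio_sum m =
      sqrt (real (N m) / real m * (wallis_seq (N m) / wallis_seq m))" for m
    by (simp add: binom_ratio_sum_eq_sqrt real_sqrt_divide[symmetric] times_divide_times_eq)
  then show ?thesis
    using tendsto_real_sqrt[OF wallis_seq_ratio_tendsto[OF assms]] by simp
qed

definition even_cycle_perms_on :: "'a set \<Rightarrow> ('a \<Rightarrow> 'a) set" where
  "even_cycle_perms_on S = {\<sigma>. \<sigma> permutes S \<and> (\<forall>x\<in>S. even (card (orbit \<sigma> x)))}"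

definition rooted_even_cycle_perms :: "'a set \<Rightarrow> 'a \<Rightarrow> nat \<Rightarrow> ('a \<Rightarrow> 'a) set" where
  "rooted_even_cycle_perms S a L = {\<sigma>. \<sigma> permutes S \<and> card (orbit \<sigma> a) = L \<and>
      (\<forall>x\<in>S. x \<notin> orbit \<sigma> a \<longrightarrow> even (card (orbit \<sigma> x)))}"

definition even_cycle_count :: "nat \<Rightarrow> real" where
  "even_cycle_count n = (if even n then fact n * binom_ratio (n div 2) else 0)"

lemma finite_rooted_even_cycle_perms: "finite S \<Longrightarrow> finite (rooted_even_cycle_perms S a L)"
  by (rule finite_subset[OF _ finite_permutations[of S]]) (auto simp: rooted_even_cycle_perms_def)

lemma orbit_eq_if_mem_orbit:
  assumes "permutation \<sigma>" "y \<in> orbit \<sigma> x"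
  shows "orbit \<sigma> y = orbit \<sigma> x"
  using orbit_cyclic_eq3[OF cyclic_on_orbit'[OF assms(1)] assms(2)] .

lemma card_orbit_eq_1_iff:
  assumes "permutation \<sigma>"
  shows "card (orbit \<sigma> a) = 1 \<longleftrightarrow> \<sigma> a = a"
  using eq_on_cyclic_on_iff1[OF cyclic_on_orbit'[OF assms] permutation_self_in_orbit[OF assms]]
  by metis

lemma card_orbit_bounds:
  assumes "\<sigma> permutes S" "finite S" "a \<in> S"
  shows "1 \<le> card (orbit \<sigma> a)" "card (orbit \<sigma> a) \<le> card S"
proof -
  have sub: "orbit \<sigma> a \<subseteq> S" using assms(1,3) by (rule permutes_orbit_subset)
  then have "finite (orbit \<sigma> a)" using assms(2) by (rule finite_subset)
  then show "1 \<le> card (orbit \<sigma> a)"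
    using orbit_nonempty by (simp add: Suc_le_eq card_gt_0_iff)
  show "card (orbit \<sigma> a) \<le> card S" using sub assms(2) by (rule card_mono[rotated])
qed

text \<open>
  Composing with the transposition of \<open>a\<close> and \<open>\<sigma> a\<close> cuts \<open>\<sigma> a\<close> out of the cycle of \<open>a\<close>,
  turning it into a fixed point, and leaves every other cycle untouched.
\<close>
lemma permutes_comp_transpose_successor:
  assumes "\<sigma> permutes S" "a \<in> S"
  shows "\<sigma> \<circ> Transposition.transpose a (\<sigma> a) permutes S - {\<sigma> a}"
proof (rule permutes_superset)
  show "\<sigma> \<circ> Transposition.transpose a (\<sigma> a) permutes S"
    using assms by (intro permutes_compose permutes_swap_id) (auto simp: permutes_in_image)
qed simp

lemma orbit_comp_transpose_successor_subset:
  assumes "permutation \<sigma>"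
  shows "orbit (\<sigma> \<circ> Transposition.transpose a (\<sigma> a)) a \<subseteq> orbit \<sigma> a"
proof
  have aa: "a \<in> orbit \<sigma> a" using assms by (rule permutation_self_in_orbit)
  have ba: "\<sigma> a \<in> orbit \<sigma> a" by (rule orbit.base)
  fix y assume "y \<in> orbit (\<sigma> \<circ> Transposition.transpose a (\<sigma> a)) a"
  then show "y \<in> orbit \<sigma> a"
  proof induction
    case base
    then show ?case using ba by (simp add: orbit.step)
  next
    case (step y)
    then have "Transposition.transpose a (\<sigma> a) y \<in> orbit \<sigma> a"
      using aa ba by (cases "y = a"; cases "y = \<sigma> a") auto
    then show ?case by (simp add: orbit.step)
  qed
qed

lemma orbit_subset_insert_comp_transpose_successor:
  "orbit \<sigma> a \<subseteq> insert (\<sigma> a) (orbit (\<sigma> \<circ> Transposition.transpose a (\<sigma> a)) a)"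
proof
  define \<sigma>' where "\<sigma>' = \<sigma> \<circ> Transposition.transpose a (\<sigma> a)"
  fix y assume "y \<in> orbit \<sigma> a"
  then show "y \<in> insert (\<sigma> a) (orbit \<sigma>' a)"
  proof induction
    case base
    then show ?case by simp
  next
    case (step y)
    consider "y = \<sigma> a" | "y = a" | "y \<in> orbit \<sigma>' a" "y \<noteq> a" "y \<noteq> \<sigma> a"
      using step.IH by blast
    then show ?case
    proof cases
      case 1
      have "\<sigma>' a = \<sigma> (\<sigma> a)" by (simp add: \<sigma>'_def)
      then show ?thesis using orbit.base[of \<sigma>' a] 1 by simp
    next
      case 2
      then show ?thesis by simp
    next
      case 3
      then have "\<sigma>' y = \<sigma> y" by (simp add: \<sigma>'_def)
      then show ?thesis using orbit.step[OF 3(1)] by simp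
    qed
  qed
qed

lemma orbit_comp_transpose_successor:
  assumes "permutation \<sigma>"
  shows "orbit \<sigma> a = insert (\<sigma> a) (orbit (\<sigma> \<circ> Transposition.transpose a (\<sigma> a)) a)"
  using orbit_comp_transpose_successor_subset[OF assms, of a]
    orbit_subset_insert_comp_transpose_successor[of \<sigma> a] orbit.base[of \<sigma> a]
  by (intro equalityI) auto

lemma orbit_comp_transpose_successor_other:
  assumes "permutation \<sigma>" "x \<notin> orbit \<sigma> a"
  shows "orbit (\<sigma> \<circ> Transposition.transpose a (\<sigma> a)) x = orbit \<sigma> x"
proof (rule orbit_cong)
  show xx: "x \<in> orbit \<sigma> x" using assms(1) by (rule permutation_self_in_orbit)
  fix y assume "y \<in> orbit \<sigma> x"
  then have "orbit \<sigma> y = orbit \<sigma> x" by (rule orbit_eq_if_mem_orbit[OF assms(1)])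
  moreover have "orbit \<sigma> (\<sigma> a) = orbit \<sigma> a"
    using orbit_eq_if_mem_orbit[OF assms(1) orbit.base] .
  ultimately have "y \<noteq> a" "y \<noteq> \<sigma> a"
    using assms(2) xx permutation_self_in_orbit[OF assms(1), of a] by auto
  then show "(\<sigma> \<circ> Transposition.transpose a (\<sigma> a)) y = \<sigma> y" by simp
qed

lemma rooted_even_cycle_perms_Suc_iff:
  assumes perm: "\<sigma> permutes S" and fin: "finite S" and aS: "a \<in> S" and ne: "\<sigma> a \<noteq> a"
  shows "\<sigma> \<in> rooted_even_cycle_perms S a (Suc L) \<longleftrightarrow>
    \<sigma> \<circ> Transposition.transpose a (\<sigma> a) \<in> rooted_even_cycle_perms (S - {\<sigma> a}) a L"
proof -
  define \<sigma>' where "\<sigma>' = \<sigma> \<circ> Transposition.transpose a (\<sigma> a)"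
  have pm: "permutation \<sigma>" using fin perm by (rule permutes_imp_permutation)
  have perm': "\<sigma>' permutes S - {\<sigma> a}"
    unfolding \<sigma>'_def using perm aS by (rule permutes_comp_transpose_successor)
  have orbit: "orbit \<sigma> a = insert (\<sigma> a) (orbit \<sigma>' a)"
    unfolding \<sigma>'_def using pm by (rule orbit_comp_transpose_successor)
  have "orbit \<sigma>' a \<subseteq> S - {\<sigma> a}" using perm' aS ne by (intro permutes_orbit_subset) auto
  then have card: "card (orbit \<sigma> a) = Suc (card (orbit \<sigma>' a))"
    unfolding orbit using fin finite_subset by (subst card_insert_disjoint) auto
  have rest: "(\<forall>x\<in>S. x \<notin> orbit \<sigma> a \<longrightarrow> even (card (orbit \<sigma> x))) \<longleftrightarrow>
      (\<forall>x\<in>S - {\<sigma> a}. x \<notin> orbit \<sigma>' a \<longrightarrow> even (card (orbit \<sigma>' x)))"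
    using orbit orbit_comp_transpose_successor_other[OF pm] by (auto simp: \<sigma>'_def)
  show ?thesis
    unfolding rooted_even_cycle_perms_def mem_Collect_eq card rest \<sigma>'_def[symmetric]
    using perm perm' by simp
qed

lemma rooted_even_cycle_perms_1:
  assumes fin: "finite S" and aS: "a \<in> S"
  shows "rooted_even_cycle_perms S a 1 = even_cycle_perms_on (S - {a})"
proof (intro set_eqI iffI)
  fix \<sigma> assume \<sigma>: "\<sigma> \<in> rooted_even_cycle_perms S a 1"
  then have perm: "\<sigma> permutes S" by (simp add: rooted_even_cycle_perms_def)
  have fixed: "\<sigma> a = a"
    using \<sigma> card_orbit_eq_1_iff[OF permutes_imp_permutation[OF fin perm]]
    by (simp add: rooted_even_cycle_perms_def)
  then have "orbit \<sigma> a = {a}" by (simp add: orbit_eq_singleton_iff)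
  moreover have "\<sigma> permutes S - {a}"
    by (rule permutes_superset[OF perm]) (use fixed in auto)
  ultimately show "\<sigma> \<in> even_cycle_perms_on (S - {a})"
    using \<sigma> by (simp add: rooted_even_cycle_perms_def even_cycle_perms_on_def)
next
  fix \<sigma> assume \<sigma>: "\<sigma> \<in> even_cycle_perms_on (S - {a})"
  then have perm: "\<sigma> permutes S - {a}" by (simp add: even_cycle_perms_on_def)
  then have "orbit \<sigma> a = {a}" by (simp add: permutes_not_in orbit_eq_singleton_iff)
  moreover have "\<sigma> permutes S" using perm by (rule permutes_subset) auto
  ultimately show "\<sigma> \<in> rooted_even_cycle_perms S a 1"
    using \<sigma> by (auto simp: rooted_even_cycle_perms_def even_cycle_perms_on_def)
qed

lemma bij_betw_rooted_even_cycle_perms_Suc: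
  assumes fin: "finite S" and aS: "a \<in> S" and L: "L \<ge> 1"
  shows "bij_betw (\<lambda>\<sigma>. (\<sigma> a, \<sigma> \<circ> Transposition.transpose a (\<sigma> a)))
    (rooted_even_cycle_perms S a (Suc L)) (SIGMA b:S - {a}. rooted_even_cycle_perms (S - {b}) a L)"
proof (rule bij_betw_byWitness[where f'="\<lambda>(b, \<tau>). \<tau> \<circ> Transposition.transpose a b"], goal_cases)
  case 1
  then show ?case by (simp add: fun_eq_iff)
next
  case 2
  then show ?case by (auto simp: fun_eq_iff rooted_even_cycle_perms_def permutes_not_in)
next
  case 3
  show ?case
  proof (rule image_subsetI)
    fix \<sigma> assume \<sigma>: "\<sigma> \<in> rooted_even_cycle_perms S a (Suc L)"
    then have perm: "\<sigma> permutes S" by (simp add: rooted_even_cycle_perms_def)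
    have "\<sigma> a \<noteq> a"
      using \<sigma> card_orbit_eq_1_iff[OF permutes_imp_permutation[OF fin perm], of a] L
      by (auto simp: rooted_even_cycle_perms_def)
    moreover have "\<sigma> a \<in> S" using perm aS by (simp add: permutes_in_image)
    ultimately show "(\<sigma> a, \<sigma> \<circ> Transposition.transpose a (\<sigma> a)) \<in>
        (SIGMA b:S - {a}. rooted_even_cycle_perms (S - {b}) a L)"
      using rooted_even_cycle_perms_Suc_iff[OF perm fin aS] \<sigma> by auto
  qed
next
  case 4
  show ?case
  proof (rule image_subsetI)
    fix p assume "p \<in> (SIGMA b:S - {a}. rooted_even_cycle_perms (S - {b}) a L)"
    then obtain b \<tau> where p: "p = (b, \<tau>)"
      and b: "b \<in> S - {a}" and \<tau>: "\<tau> \<in> rooted_even_cycle_perms (S - {b}) a L"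
      by blast
    define \<sigma> where "\<sigma> = \<tau> \<circ> Transposition.transpose a b"
    from \<tau> have \<tau>b: "\<tau> permutes S - {b}" by (simp add: rooted_even_cycle_perms_def)
    then have "\<tau> b = b" by (simp add: permutes_not_in)
    then have \<sigma>a: "\<sigma> a = b" and cut: "\<sigma> \<circ> Transposition.transpose a b = \<tau>"
      by (simp_all add: \<sigma>_def fun_eq_iff)
    have "\<sigma> permutes S" unfolding \<sigma>_def
      using permutes_compose[OF permutes_swap_id permutes_subset[OF \<tau>b]] aS b by auto
    then have "\<sigma> \<in> rooted_even_cycle_perms S a (Suc L)"
      using rooted_even_cycle_perms_Suc_iff[OF _ fin aS, of \<sigma> L] \<sigma>a cut \<tau> b by auto
    then show "(\<lambda>(b, \<tau>). \<tau> \<circ> Transposition.transpose a b) p \<in> rooted_even_cycle_perms S a (Suc L)"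
      by (simp add: p \<sigma>_def)
  qed
qed

lemma card_rooted_even_cycle_perms_Suc:
  assumes "finite S" "a \<in> S" "L \<ge> 1"
  shows "card (rooted_even_cycle_perms S a (Suc L)) =
    (\<Sum>b\<in>S - {a}. card (rooted_even_cycle_perms (S - {b}) a L))"
proof -
  have "card (rooted_even_cycle_perms S a (Suc L)) =
      card (SIGMA b:S - {a}. rooted_even_cycle_perms (S - {b}) a L)"
    using bij_betw_rooted_even_cycle_perms_Suc[OF assms] by (rule bij_betw_same_card)
  also have "\<dots> = (\<Sum>b\<in>S - {a}. card (rooted_even_cycle_perms (S - {b}) a L))"
    using assms by (intro card_SigmaI) (auto intro: finite_rooted_even_cycle_perms)
  finally show ?thesis .
qed

lemma card_rooted_even_cycle_perms:
  fixes S :: "'a set"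
  assumes "finite S" "a \<in> S" "1 \<le> L" "L \<le> card S"
    and smaller: "\<And>T::'a set. finite T \<Longrightarrow> card T < card S \<Longrightarrow>
      real (card (even_cycle_perms_on T)) = even_cycle_count (card T)"
  shows "real (card (rooted_even_cycle_perms S a L)) * fact (card S - L) =
    fact (card S - 1) * even_cycle_count (card S - L)"
  using assms
proof (induction L arbitrary: S)
  case 0
  then show ?case by simp
next
  case (Suc L S)
  note fin = Suc.prems(1) and aS = Suc.prems(2) and smaller = Suc.prems(5)
  define n where "n = card S"
  show ?case
  proof (cases "L = 0")
    case True
    have "card (S - {a}) < card S" using fin aS by (rule card_Diff1_less)
    then show ?thesis
      using rooted_even_cycle_perms_1[OF fin aS] smaller[of "S - {a}"] True fin aS by simp
  next
    case False
    then have n2: "n \<ge> 2" using Suc.prems(4) n_def by simp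
    have IH: "real (card (rooted_even_cycle_perms (S - {b}) a L)) * fact (n - Suc L) =
        fact (n - 2) * even_cycle_count (n - Suc L)" if b: "b \<in> S - {a}" for b
    proof -
      have cb: "card (S - {b}) = n - 1" using b fin n_def by simp
      have "real (card (rooted_even_cycle_perms (S - {b}) a L)) * fact (card (S - {b}) - L) =
          fact (card (S - {b}) - 1) * even_cycle_count (card (S - {b}) - L)"
        by (rule Suc.IH) (use fin aS b cb False Suc.prems(4) n_def smaller in auto)
      moreover have "card (S - {b}) - L = n - Suc L" "card (S - {b}) - 1 = n - 2" using cb by auto
      ultimately show ?thesis by simp
    qed
    have "real (card (rooted_even_cycle_perms S a (Suc L))) * fact (n - Suc L) =
        (\<Sum>b\<in>S - {a}. real (card (rooted_even_cycle_perms (S - {b}) a L)) * fact (n - Suc L))"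
      using card_rooted_even_cycle_perms_Suc[OF fin aS] False by (simp add: sum_distrib_right)
    also have "\<dots> = real (n - 1) * (fact (n - 2) * even_cycle_count (n - Suc L))"
      using IH fin aS n_def by simp
    also have "\<dots> = fact (n - 1) * even_cycle_count (n - Suc L)"
      using n2 fact_Suc[of "n - 2", where 'a=real] by (simp add: Suc_diff_Suc numeral_2_eq_2)
    finally show ?thesis unfolding n_def .
  qed
qed

lemma even_cycle_perms_on_filter_orbit_card:
  assumes fin: "finite S" and aS: "a \<in> S"
  shows "{\<sigma> \<in> even_cycle_perms_on S. Q (card (orbit \<sigma> a))} =
    (\<Union>L\<in>{L\<in>{1..card S}. even L \<and> Q L}. rooted_even_cycle_perms S a L)"
proof (intro set_eqI iffI)
  fix \<sigma> assume \<sigma>: "\<sigma> \<in> {\<sigma> \<in> even_cycle_perms_on S. Q (card (orbit \<sigma> a))}"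
  then have "\<sigma> permutes S" by (simp add: even_cycle_perms_on_def)
  then show "\<sigma> \<in> (\<Union>L\<in>{L\<in>{1..card S}. even L \<and> Q L}. rooted_even_cycle_perms S a L)"
    using card_orbit_bounds[OF _ fin aS] \<sigma> aS
    by (auto simp: even_cycle_perms_on_def rooted_even_cycle_perms_def)
next
  fix \<sigma> assume "\<sigma> \<in> (\<Union>L\<in>{L\<in>{1..card S}. even L \<and> Q L}. rooted_even_cycle_perms S a L)"
  then obtain L where L: "even L" "Q L" and \<sigma>: "\<sigma> \<in> rooted_even_cycle_perms S a L" by auto
  then have perm: "\<sigma> permutes S" by (simp add: rooted_even_cycle_perms_def)
  have "even (card (orbit \<sigma> x))" if "x \<in> S" for x
    using that \<sigma> L orbit_eq_if_mem_orbit[OF permutes_imp_permutation[OF fin perm], of x a]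
    by (cases "x \<in> orbit \<sigma> a") (auto simp: rooted_even_cycle_perms_def)
  then show "\<sigma> \<in> {\<sigma> \<in> even_cycle_perms_on S. Q (card (orbit \<sigma> a))}"
    using perm \<sigma> L by (auto simp: even_cycle_perms_on_def rooted_even_cycle_perms_def)
qed

lemma card_even_cycle_perms_on_filter_orbit_card:
  fixes S :: "'a set"
  assumes fin: "finite S" and aS: "a \<in> S"
    and smaller: "\<And>T::'a set. finite T \<Longrightarrow> card T < card S \<Longrightarrow>
      real (card (even_cycle_perms_on T)) = even_cycle_count (card T)"
  shows "real (card {\<sigma> \<in> even_cycle_perms_on S. Q (card (orbit \<sigma> a))}) =
    (\<Sum>L\<in>{L\<in>{1..card S}. even L \<and> Q L}.
       fact (card S - 1) * even_cycle_count (card S - L) / fact (card S - L))"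
proof -
  have "card {\<sigma> \<in> even_cycle_perms_on S. Q (card (orbit \<sigma> a))} =
      (\<Sum>L\<in>{L\<in>{1..card S}. even L \<and> Q L}. card (rooted_even_cycle_perms S a L))"
    unfolding even_cycle_perms_on_filter_orbit_card[OF fin aS]
    by (rule card_UN_disjoint)
      (simp_all add: fin finite_rooted_even_cycle_perms, auto simp: rooted_even_cycle_perms_def)
  then have "real (card {\<sigma> \<in> even_cycle_perms_on S. Q (card (orbit \<sigma> a))}) =
      (\<Sum>L\<in>{L\<in>{1..card S}. even L \<and> Q L}. real (card (rooted_even_cycle_perms S a L)))"
    by simp
  also have "\<dots> = (\<Sum>L\<in>{L\<in>{1..card S}. even L \<and> Q L}.
      fact (card S - 1) * even_cycle_count (card S - L) / fact (card S - L))"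
    using card_rooted_even_cycle_perms[OF fin aS _ _ smaller]
    by (intro sum.cong refl) (simp add: eq_divide_eq)
  finally show ?thesis .
qed

lemma sum_rooted_counts_even_card:
  "(\<Sum>L\<in>{L\<in>{1..2*m}. even L \<and> Q L}.
      fact (2*m - 1) * even_cycle_count (2*m - L) / fact (2*m - L)) =
    fact (2*m - 1) * (\<Sum>k\<in>{k\<in>{1..m}. Q (2*k)}. binom_ratio (m - k))"
proof -
  have "{L\<in>{1..2*m}. even L \<and> Q L} = (\<lambda>k. 2*k) ` {k\<in>{1..m}. Q (2*k)}"
    by (auto elim!: evenE)
  moreover have "inj_on (\<lambda>k::nat. 2*k) {k\<in>{1..m}. Q (2*k)}" by (auto simp: inj_on_def)
  moreover have "2*m - 2*k = 2 * (m - k)" for k :: nat by simp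
  ultimately show ?thesis
    by (simp add: sum.reindex sum_distrib_left even_cycle_count_def)
qed

lemma sum_rooted_counts_odd_card:
  assumes "odd n"
  shows "(\<Sum>L\<in>{L\<in>{1..n}. even L \<and> Q L}. c * even_cycle_count (n - L) / fact (n - L)) = 0"
  using assms by (intro sum.neutral) (auto simp: even_cycle_count_def)

lemma card_even_cycle_perms_on:
  "finite S \<Longrightarrow> real (card (even_cycle_perms_on S)) = even_cycle_count (card S)"
proof (induction "card S" arbitrary: S rule: less_induct)
  case less
  show ?case
  proof (cases "S = {}")
    case True
    then have "even_cycle_perms_on S = {id}" by (auto simp: even_cycle_perms_on_def)
    then show ?thesis using True by (simp add: even_cycle_count_def)
  next
    case False
    then obtain a where aS: "a \<in> S" by blast
    define n where "n = card S"
    have count: "real (card (even_cycle_perms_on S)) =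
        (\<Sum>L\<in>{L\<in>{1..n}. even L \<and> True}. fact (n - 1) * even_cycle_count (n - L) / fact (n - L))"
      using card_even_cycle_perms_on_filter_orbit_card[OF less.prems aS less.hyps, of "\<lambda>_. True"]
      by (simp add: n_def)
    show ?thesis
    proof (cases "even n")
      case True
      then obtain m where m: "n = 2 * m" by (rule evenE)
      have "m \<ge> 1" using m False less.prems n_def card_0_eq by fastforce
      have "(\<Sum>k\<in>{k\<in>{1..m}. True}. binom_ratio (m - k)) = binom_ratio_sum m"
        unfolding binom_ratio_sum_def
        by (rule sum.reindex_bij_witness[where i="\<lambda>j. m - j" and j="\<lambda>k. m - k"]) auto
      then have "real (card (even_cycle_perms_on S)) = fact (2*m - 1) * binom_ratio_sum m"
        using count sum_rooted_counts_even_card[of m "\<lambda>_. True"] by (simp only: m)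
      also have "\<dots> = fact (2*m) * binom_ratio m"
        using \<open>m \<ge> 1\<close> fact_reduce[of "2*m", where 'a=real] by (simp add: binom_ratio_sum_eq)
      finally show ?thesis by (simp add: even_cycle_count_def m n_def[symmetric])
    next
      case False
      then show ?thesis
        using count sum_rooted_counts_odd_card[OF False] by (simp add: even_cycle_count_def n_def)
    qed
  qed
qed

lemma even_cycle_perms_eq: "even_cycle_perms n = even_cycle_perms_on {1..n}"
  by (simp add: even_cycle_perms_def even_cycle_perms_on_def cycle_len_def)

lemma p_e_eq_sum:
  assumes "m \<ge> 1"
  shows "p_e (2*m) \<gamma> \<delta> =
    (\<Sum>k\<in>{k\<in>{1..m}. \<gamma> * real (2*m) \<le> real (2*k) \<and> real (2*k) \<le> \<delta> * real (2*m)}.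
       binom_ratio (m - k)) / binom_ratio_sum m"
proof -
  define Q where "Q = (\<lambda>L::nat. \<gamma> * real (2*m) \<le> real L \<and> real L \<le> \<delta> * real (2*m))"
  have S: "finite {1..2*m}" "card {1..2*m} = 2*m" "(1::nat) \<in> {1..2*m}" using assms by auto
  have "real (card {\<sigma> \<in> even_cycle_perms_on {1..2*m}. Q (card (orbit \<sigma> 1))}) =
      fact (2*m - 1) * (\<Sum>k\<in>{k\<in>{1..m}. Q (2*k)}. binom_ratio (m - k))"
    using card_even_cycle_perms_on_filter_orbit_card[OF S(1,3) card_even_cycle_perms_on, of Q]
      sum_rooted_counts_even_card[of m Q] by (simp only: S(2))
  moreover have "real (card (even_cycle_perms_on {1..2*m})) = fact (2*m - 1) * binom_ratio_sum m"
    using card_even_cycle_perms_on[OF S(1)] assms fact_reduce[of "2*m", where 'a=real]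
    by (simp add: even_cycle_count_def binom_ratio_sum_eq)
  ultimately show ?thesis
    by (simp add: p_e_def even_cycle_perms_eq cycle_len_def Q_def)
qed

text \<open>The window \<open>(1-\<delta>)m \<le> j \<le> (1-\<gamma>)m\<close>, \<open>j < m\<close>, is \<open>{window_start \<delta> m..<window_end \<gamma> m}\<close>.\<close>
definition window_start :: "real \<Rightarrow> nat \<Rightarrow> nat" where
  "window_start \<delta> m = nat \<lceil>(1 - \<delta>) * real m\<rceil>"

definition window_end :: "real \<Rightarrow> nat \<Rightarrow> nat" where
  "window_end \<gamma> m = min m (nat \<lfloor>(1 - \<gamma>) * real m\<rfloor> + 1)"

lemma window_start_le_iff:
  "window_start \<delta> m \<le> j \<longleftrightarrow> (1 - \<delta>) * real m \<le> real j"
  unfolding window_start_def by (simp add: nat_le_iff ceiling_le_iff)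

lemma less_window_end_iff:
  assumes "\<gamma> \<le> 1"
  shows "j < window_end \<gamma> m \<longleftrightarrow> j < m \<and> real j \<le> (1 - \<gamma>) * real m"
proof -
  have "0 \<le> (1 - \<gamma>) * real m" using assms by simp
  then have "j < nat \<lfloor>(1 - \<gamma>) * real m\<rfloor> + 1 \<longleftrightarrow> real j \<le> (1 - \<gamma>) * real m"
    by (simp add: le_nat_iff less_Suc_eq_le le_floor_iff)
  then show ?thesis unfolding window_end_def by simp
qed

lemma window_start_le_window_end:
  assumes "0 \<le> \<gamma>" "\<gamma> \<le> \<delta>" "\<delta> \<le> 1"
  shows "window_start \<delta> m \<le> window_end \<gamma> m"
proof -
  have "\<lceil>(1 - \<delta>) * real m\<rceil> \<le> \<lceil>(1 - \<gamma>) * real m\<rceil>"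
    using assms by (intro ceiling_mono mult_right_mono) auto
  also have "\<dots> \<le> \<lfloor>(1 - \<gamma>) * real m\<rfloor> + 1"
    using real_of_int_floor_add_one_gt[of "(1 - \<gamma>) * real m"] by (simp add: ceiling_le_iff)
  finally have "\<lceil>(1 - \<delta>) * real m\<rceil> \<le> \<lfloor>(1 - \<gamma>) * real m\<rfloor> + 1" .
  moreover have "\<lceil>(1 - \<delta>) * real m\<rceil> \<le> int m"
    using assms by (simp add: ceiling_le_iff mult_left_le_one_le)
  moreover have "0 \<le> \<lfloor>(1 - \<gamma>) * real m\<rfloor>" using assms by simp
  ultimately show ?thesis unfolding window_start_def window_end_def by (simp add: nat_le_iff)
qed

lemma sum_cycle_lengths_eq_window_sum:
  assumes "0 \<le> \<gamma>" "\<gamma> \<le> \<delta>" "\<delta> \<le> 1"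
  shows "(\<Sum>k\<in>{k\<in>{1..m}. \<gamma> * real (2*m) \<le> real (2*k) \<and> real (2*k) \<le> \<delta> * real (2*m)}.
      binom_ratio (m - k)) = (\<Sum>j\<in>{window_start \<delta> m..<window_end \<gamma> m}. binom_ratio j)"
proof (rule sum.reindex_bij_witness[where i="\<lambda>j. m - j" and j="\<lambda>k. m - k"])
  fix k
  assume k: "k \<in> {k\<in>{1..m}. \<gamma> * real (2*m) \<le> real (2*k) \<and> real (2*k) \<le> \<delta> * real (2*m)}"
  then have "real (m - k) = real m - real k" by simp
  then show "m - k \<in> {window_start \<delta> m..<window_end \<gamma> m}"
    using k assms by (auto simp: window_start_le_iff less_window_end_iff algebra_simps)
  show "m - (m - k) = k" "binom_ratio (m - k) = binom_ratio (m - k)" using k by auto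
next
  fix j assume j: "j \<in> {window_start \<delta> m..<window_end \<gamma> m}"
  then have "j < m" using assms by (simp add: less_window_end_iff)
  then have "real (m - j) = real m - real j" by simp
  then show "m - j \<in> {k\<in>{1..m}. \<gamma> * real (2*m) \<le> real (2*k) \<and> real (2*k) \<le> \<delta> * real (2*m)}"
    using j \<open>j < m\<close> assms by (auto simp: window_start_le_iff less_window_end_iff algebra_simps)
  show "m - (m - j) = j" using \<open>j < m\<close> by simp
qed

lemma p_e_eq_binom_ratio_sum_diff:
  assumes "0 \<le> \<gamma>" "\<gamma> \<le> \<delta>" "\<delta> \<le> 1" "m \<ge> 1"
  shows "p_e (2*m) \<gamma> \<delta> =
    binom_ratio_sum (window_end \<gamma> m) / binom_ratio_sum m -
    binom_ratio_sum (window_start \<delta> m) / binom_ratio_sum m"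
proof -
  have "(\<Sum>j\<in>{window_start \<delta> m..<window_end \<gamma> m}. binom_ratio j) =
      binom_ratio_sum (window_end \<gamma> m) - binom_ratio_sum (window_start \<delta> m)"
    using sum_diff_nat_ivl[OF _ window_start_le_window_end[OF assms(1-3)], of 0 m binom_ratio]
    by (simp add: binom_ratio_sum_def atLeast0LessThan)
  then show ?thesis
    unfolding p_e_eq_sum[OF assms(4)] sum_cycle_lengths_eq_window_sum[OF assms(1-3)]
    by (simp add: diff_divide_distrib)
qed

lemma tendsto_div_if_linear_bounds:
  assumes "\<And>m. t * real m \<le> real (N m)" "\<And>m. real (N m) \<le> t * real m + 1"
  shows "(\<lambda>m. real (N m) / real m) \<longlonglongrightarrow> t"
proof (rule tendsto_sandwich[where f="\<lambda>m. t" and h="\<lambda>m. t + 1 / real m"])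
  show "\<forall>\<^sub>F m in sequentially. t \<le> real (N m) / real m"
    using eventually_ge_at_top[of "1::nat"]
    by eventually_elim (use assms(1) in \<open>simp add: pos_le_divide_eq\<close>)
  show "\<forall>\<^sub>F m in sequentially. real (N m) / real m \<le> t + 1 / real m"
    using eventually_ge_at_top[of "1::nat"]
    by eventually_elim (use assms(2) in \<open>simp add: pos_divide_le_eq algebra_simps\<close>)
  show "(\<lambda>m. t + 1 / real m) \<longlonglongrightarrow> t"
    using tendsto_add[OF tendsto_const lim_const_over_n[of 1]] by simp
qed simp

lemma window_start_tendsto:
  assumes "\<delta> \<le> 1"
  shows "(\<lambda>m. real (window_start \<delta> m) / real m) \<longlonglongrightarrow> 1 - \<delta>"
proof (rule tendsto_div_if_linear_bounds)
  fix m
  have "real (window_start \<delta> m) = real_of_int \<lceil>(1 - \<delta>) * real m\<rceil>"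
    unfolding window_start_def using assms by simp
  then show "(1 - \<delta>) * real m \<le> real (window_start \<delta> m)"
    "real (window_start \<delta> m) \<le> (1 - \<delta>) * real m + 1"
    by (simp_all add: le_of_int_ceiling)
qed

lemma window_end_tendsto:
  assumes "0 \<le> \<gamma>" "\<gamma> \<le> 1"
  shows "(\<lambda>m. real (window_end \<gamma> m) / real m) \<longlonglongrightarrow> 1 - \<gamma>"
proof (rule tendsto_div_if_linear_bounds)
  fix m
  have "real (window_end \<gamma> m) = min (real m) (real_of_int \<lfloor>(1 - \<gamma>) * real m\<rfloor> + 1)"
    unfolding window_end_def using assms by (simp add: of_nat_min)
  moreover have "(1 - \<gamma>) * real m \<le> real m" using assms by (simp add: mult_left_le_one_le)
  ultimately show "(1 - \<gamma>) * real m \<le> real (window_end \<gamma> m)"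
    "real (window_end \<gamma> m) \<le> (1 - \<gamma>) * real m + 1"
    using real_of_int_floor_add_one_gt[of "(1 - \<gamma>) * real m"]
      of_int_floor_le[of "(1 - \<gamma>) * real m"]
    by (auto simp: min_le_iff_disj)
qed

theorem theorem3p5:
  fixes \<gamma> \<delta> :: real
  assumes "0 \<le> \<gamma>" "\<gamma> \<le> \<delta>" "\<delta> \<le> 1"
  shows "(\<lambda>m. p_e (2 * m) \<gamma> \<delta>) \<longlonglongrightarrow> sqrt (1 - \<gamma>) - sqrt (1 - \<delta>)"
proof -
  have "(\<lambda>m. binom_ratio_sum (window_end \<gamma> m) / binom_ratio_sum m -
      binom_ratio_sum (window_start \<delta> m) / binom_ratio_sum m) \<longlonglongrightarrow> sqrt (1 - \<gamma>) - sqrt (1 - \<delta>)"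
    using assms
    by (intro tendsto_diff binom_ratio_sum_ratio_tendsto window_end_tendsto window_start_tendsto)
      auto
  moreover have "\<forall>\<^sub>F m in sequentially. binom_ratio_sum (window_end \<gamma> m) / binom_ratio_sum m -
      binom_ratio_sum (window_start \<delta> m) / binom_ratio_sum m = p_e (2 * m) \<gamma> \<delta>"
    using eventually_ge_at_top[of "1::nat"]
    by eventually_elim (simp add: p_e_eq_binom_ratio_sum_diff[OF assms])
  ultimately show ?thesis by (rule Lim_transform_eventually)
qed

end
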